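(* Let $M\in\mathbb{R}^{m\times m}$ be symmetric with $k_{\underline m}I_m\le M\le k_{\overline m}I_m$ for constants $0<k_{\underline m}\le k_{\overline m}$ (with $k_{\underline m}<k_{\overline m}$ or equality allowed), let $C\in\mathbb{R}^{m\times m}$, $G\in\mathbb{R}^m$, $v\in\mathbb{R}^m$ satisfy $\|C\|\le k_c\|v\|$ and $\|G\|\le k_g$ for constants $k_c,k_g>0$. Set $\hat M=\frac{2}{k_{\underline m}^{-1}+k_{\overline m}^{-1}}I_m$, $\epsilon=\frac{k_{\underline m}^{-1}-k_{\overline m}^{-1}}{k_{\underline m}^{-1}+k_{\overline m}^{-1}}$, $f(v)=k_{\underline m}^{-1}(k_c\|v\|^2+k_g)$, $F=-M^{-1}(Cv+G)$. For arbitrary $\zeta,u_2\in\mathbb{R}^m$ and $\kappa\ge1$ define $$u_1=\begin{cases}-\frac{\kappa}{1-\epsilon}\frac{\zeta}{\|\zeta\|}\big(\epsilon\|u_2\|+f(v)\big),&\zeta\ne0,\\ 0,&\zeta=0,\end{cases}\qquad Z=u_1+(M^{-1}\hat M-I_m)(u_1+u_2)+F.$$ Then $\zeta^TZ\le0$.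
   Context: $\|\cdot\|$ denotes the Euclidean norm of vectors and the induced spectral norm of matrices. In the application, $M=M_i(q_i)$, $C=C_i(q_i,\dot q_i)$, $G=G_i(q_i)$, $v=\dot q_i$ are the inertia matrix, Coriolis/centrifugal matrix, gravity vector and velocity of an Euler–Lagrange system $M_i(q_i)\ddot q_i+C_i(q_i,\dot q_i)\dot q_i+G_i(q_i)=\tau_i$. *)

theory Defs
  imports "HOL-Analysis.Analysis"
begin

definition spec_norm :: "real^'m^'m \<Rightarrow> real" where
  "spec_norm A = onorm (\<lambda>x. A *v x)"

definition loewner_le :: "real^'m^'m \<Rightarrow> real^'m^'m \<Rightarrow> bool" where
  "loewner_le A B \<longleftrightarrow> (\<forall>x. x \<bullet> ((B - A) *v x) \<ge> 0)"

end

theory Submission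
  imports Defs
begin

text \<open>
  Write \<open>N = M\<inverse>\<close>. The Loewner bounds on \<open>M\<close> invert to
  \<open>k\<^sub>M\<inverse> I \<le> N \<le> k\<^sub>m\<inverse> I\<close>, so for \<open>h = 2 / (k\<^sub>m\<inverse> + k\<^sub>M\<inverse>)\<close> the quadratic form of the
  symmetric matrix \<open>h N - I\<close> is bounded in absolute value by \<open>\<epsilon> |x|\<^sup>2\<close>; by polarization
  \<open>\<zeta>\<^sup>T (h N - I) u\<^sub>2 \<le> \<epsilon> |\<zeta>| |u\<^sub>2|\<close>. As \<open>Mhat = h I\<close>, we have \<open>Z = h N u\<^sub>1 + (h N - I) u\<^sub>2 + F\<close>.
  The radial input contributes \<open>\<zeta>\<^sup>T h N u\<^sub>1 \<le> -(1 - \<epsilon>) c |\<zeta>| = -\<kappa> (\<epsilon> |u\<^sub>2| + f(v)) |\<zeta>|\<close>,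
  the drift satisfies \<open>\<zeta>\<^sup>T F \<le> f(v) |\<zeta>|\<close>, and \<open>\<kappa> \<ge> 1\<close> makes the sum nonpositive.
\<close>

lemma matrix_inv_right:
  fixes A :: "'a::semiring_1^'n^'m"
  assumes "invertible A"
  shows "A ** matrix_inv A = mat 1"
  using someI_ex[OF assms[unfolded invertible_def]] by (simp add: matrix_inv_def)

lemma matrix_vector_mul_matrix_inv:
  fixes A :: "'a::comm_semiring_1^'n^'n"
  assumes "invertible A"
  shows "A *v (matrix_inv A *v x) = x"
  by (simp add: assms matrix_inv_right matrix_vector_mul_assoc)

lemma scaled_identity_matrix_vector [simp]:
  "(k *\<^sub>R mat 1) *v x = k *\<^sub>R (x :: real^'n)"
  by (metis scaleR_matrix_vector_assoc matrix_vector_mul_lid)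

lemma scaled_identity_loewner_le_iff:
  "loewner_le (k *\<^sub>R mat 1) M \<longleftrightarrow> (\<forall>x. k * (norm x)\<^sup>2 \<le> x \<bullet> (M *v x))"
  by (simp add: loewner_le_def matrix_vector_mult_diff_rdistrib scaleR_matrix_vector_assoc
      inner_diff_right power2_norm_eq_inner)

lemma loewner_le_scaled_identity_iff:
  "loewner_le M (k *\<^sub>R mat 1) \<longleftrightarrow> (\<forall>x. x \<bullet> (M *v x) \<le> k * (norm x)\<^sup>2)"
  by (simp add: loewner_le_def matrix_vector_mult_diff_rdistrib scaleR_matrix_vector_assoc
      inner_diff_right power2_norm_eq_inner)

lemma symmetric_matrix_inner:
  fixes M :: "real^'n^'n"
  assumes "transpose M = M"
  shows "x \<bullet> (M *v y) = (M *v x) \<bullet> y"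
  by (metis assms dot_lmul_matrix transpose_matrix_vector)

lemma norm_matrix_vector_ge_of_coercive:
  fixes M :: "real^'n^'n"
  assumes "\<And>x. k * (norm x)\<^sup>2 \<le> x \<bullet> (M *v x)"
  shows "k * norm y \<le> norm (M *v y)"
proof (cases "y = 0")
  case False
  have "k * (norm y)\<^sup>2 \<le> norm y * norm (M *v y)"
    using assms[of y] norm_cauchy_schwarz[of y "M *v y"] by linarith
  with False show ?thesis by (simp add: power2_eq_square)
qed simp

lemma invertible_of_coercive:
  fixes M :: "real^'n^'n"
  assumes "0 < k" and "\<And>x. k * (norm x)\<^sup>2 \<le> x \<bullet> (M *v x)"
  shows "invertible M"
  unfolding invertible_left_inverse matrix_left_invertible_ker
proof (intro allI impI)
  fix x assume "M *v x = 0"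
  with norm_matrix_vector_ge_of_coercive[OF assms(2), of x] \<open>0 < k\<close> show "x = 0"
    by (simp add: mult_le_0_iff)
qed

lemma norm_matrix_inv_vector_le:
  fixes M :: "real^'n^'n"
  assumes "0 < k" and "\<And>x. k * (norm x)\<^sup>2 \<le> x \<bullet> (M *v x)"
  shows "norm (matrix_inv M *v y) \<le> inverse k * norm y"
  using norm_matrix_vector_ge_of_coercive[OF assms(2), of "matrix_inv M *v y"] \<open>0 < k\<close>
  by (simp add: matrix_vector_mul_matrix_inv[OF invertible_of_coercive[OF assms]] field_simps)

lemma symmetric_matrix_inv_inner:
  fixes M :: "real^'n^'n"
  assumes "transpose M = M" and "invertible M"
  shows "x \<bullet> (matrix_inv M *v y) = (matrix_inv M *v x) \<bullet> y"
  by (metis assms symmetric_matrix_inner matrix_vector_mul_matrix_inv)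

lemma norm_matrix_vector_sq_le:
  fixes M :: "real^'n^'n"
  assumes "transpose M = M" and "0 < K"
    and psd: "\<And>x. 0 \<le> x \<bullet> (M *v x)" and upper: "\<And>x. x \<bullet> (M *v x) \<le> K * (norm x)\<^sup>2"
  shows "(norm (M *v y))\<^sup>2 \<le> K * (y \<bullet> (M *v y))"
proof -
  \<comment> \<open>\<open>M\<^sup>2 \<le> K M\<close>: expand \<open>0 \<le> w \<bullet> M w\<close> and use \<open>M\<^sup>3 \<le> K M\<^sup>2\<close>.\<close>
  define w where "w = K *\<^sub>R y - M *v y"
  have "w \<bullet> (M *v w) = K\<^sup>2 * (y \<bullet> (M *v y)) - 2 * K * ((M *v y) \<bullet> (M *v y))
      + (M *v y) \<bullet> (M *v (M *v y))"
    using symmetric_matrix_inner[OF assms(1), of y "M *v y"]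
    by (simp add: w_def matrix_vector_mult_diff_distrib matrix_vector_mult_scaleR
        inner_diff_left inner_diff_right power2_eq_square inner_commute)
  also have "\<dots> \<le> K * (K * (y \<bullet> (M *v y)) - (M *v y) \<bullet> (M *v y))"
    using upper[of "M *v y"] unfolding power2_norm_eq_inner by (simp add: algebra_simps power2_eq_square)
  finally have "0 \<le> K * (K * (y \<bullet> (M *v y)) - (M *v y) \<bullet> (M *v y))"
    using psd[of w] by linarith
  with \<open>0 < K\<close> show ?thesis by (simp add: zero_le_mult_iff power2_norm_eq_inner)
qed

lemma matrix_inv_quadratic_lower:
  fixes M :: "real^'n^'n"
  assumes "transpose M = M" and "0 < k" and "k \<le> K"
    and lower: "\<And>x. k * (norm x)\<^sup>2 \<le> x \<bullet> (M *v x)"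
    and upper: "\<And>x. x \<bullet> (M *v x) \<le> K * (norm x)\<^sup>2"
  shows "inverse K * (norm x)\<^sup>2 \<le> x \<bullet> (matrix_inv M *v x)"
proof -
  have inv: "invertible M" by (rule invertible_of_coercive[OF \<open>0 < k\<close> lower])
  define y where "y = matrix_inv M *v x"
  have x: "x = M *v y" by (simp add: y_def matrix_vector_mul_matrix_inv[OF inv])
  have "\<And>z. 0 \<le> z \<bullet> (M *v z)"
    using lower \<open>0 < k\<close> by (smt (verit) zero_le_power2 mult_nonneg_nonneg)
  then have "(norm x)\<^sup>2 \<le> K * (x \<bullet> y)"
    unfolding x using norm_matrix_vector_sq_le[OF assms(1) _ _ upper] assms(2,3)
    by (simp add: inner_commute)
  with assms(2,3) show ?thesis by (simp add: y_def field_simps)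
qed

lemma matrix_inv_quadratic_upper:
  fixes M :: "real^'n^'n"
  assumes "0 < k" and "\<And>x. k * (norm x)\<^sup>2 \<le> x \<bullet> (M *v x)"
  shows "x \<bullet> (matrix_inv M *v x) \<le> inverse k * (norm x)\<^sup>2"
proof -
  have "x \<bullet> (matrix_inv M *v x) \<le> norm x * norm (matrix_inv M *v x)"
    by (rule norm_cauchy_schwarz)
  also have "\<dots> \<le> norm x * (inverse k * norm x)"
    by (intro mult_left_mono norm_matrix_inv_vector_le[OF assms]) simp
  finally show ?thesis by (simp add: power2_eq_square algebra_simps)
qed

lemma symmetric_inner_le_of_quadratic_bound:
  fixes g :: "'a::real_inner \<Rightarrow> 'a"
  assumes "linear g" and sym: "\<And>x y. x \<bullet> g y = g x \<bullet> y"
    and bound: "\<And>x. \<bar>x \<bullet> g x\<bar> \<le> e * (norm x)\<^sup>2"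
  shows "x \<bullet> g y \<le> e * norm x * norm y"
proof (cases "x = 0 \<or> y = 0")
  case True
  then show ?thesis using \<open>linear g\<close> by (auto simp: linear_0)
next
  case False
  define p where "p = x /\<^sub>R norm x"
  define q where "q = y /\<^sub>R norm y"
  have "4 * (p \<bullet> g q) = (p + q) \<bullet> g (p + q) - (p - q) \<bullet> g (p - q)"
    using \<open>linear g\<close> sym[of q p]
    by (simp add: linear_add linear_diff inner_add_left inner_add_right inner_diff_left
        inner_diff_right inner_commute)
  also have "\<dots> \<le> e * ((norm (p + q))\<^sup>2 + (norm (p - q))\<^sup>2)"
    using bound[of "p + q"] bound[of "p - q"] by (simp add: abs_le_iff algebra_simps)
  also have "(norm (p + q))\<^sup>2 + (norm (p - q))\<^sup>2 = 2 * (norm p)\<^sup>2 + 2 * (norm q)\<^sup>2"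
    by (simp add: power2_norm_eq_inner inner_add_left inner_add_right inner_diff_left
        inner_diff_right inner_commute)
  also have "\<dots> = 4"
    using False by (simp add: p_def q_def)
  finally have "p \<bullet> g q \<le> e" by simp
  then have "norm x * norm y * (p \<bullet> g q) \<le> norm x * norm y * e"
    by (intro mult_left_mono) simp_all
  moreover have "x \<bullet> g y = norm x * norm y * (p \<bullet> g q)"
  proof -
    have "x = norm x *\<^sub>R p" "y = norm y *\<^sub>R q" using False by (simp_all add: p_def q_def)
    then have "x \<bullet> g y = (norm x *\<^sub>R p) \<bullet> g (norm y *\<^sub>R q)" by (simp only:)
    then show ?thesis by (simp add: linear_scale[OF \<open>linear g\<close>])
  qed
  ultimately show ?thesis by (simp add: ac_simps)
qed

lemma inner_harmonic_scaling_sub_id_le: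
  fixes N :: "real^'n^'n"
  assumes sym: "\<And>x y. x \<bullet> (N *v y) = (N *v x) \<bullet> y"
    and lower: "\<And>x. b * (norm x)\<^sup>2 \<le> x \<bullet> (N *v x)"
    and upper: "\<And>x. x \<bullet> (N *v x) \<le> a * (norm x)\<^sup>2"
    and "0 < b" and "b \<le> a"
  shows "z \<bullet> ((2 / (a + b)) *\<^sub>R (N *v y) - y) \<le> (a - b) / (a + b) * norm z * norm y"
proof -
  define h where "h = 2 / (a + b)"
  define e where "e = (a - b) / (a + b)"
  define g where "g = (\<lambda>x. h *\<^sub>R (N *v x) - x)"
  have "linear g" unfolding g_def
    by (intro linearI) (simp_all add: matrix_vector_right_distrib matrix_vector_mult_scaleR algebra_simps)
  moreover have "\<And>x y. x \<bullet> g y = g x \<bullet> y"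
    using sym by (simp add: g_def inner_diff_left inner_diff_right inner_commute)
  moreover have "\<bar>x \<bullet> g x\<bar> \<le> e * (norm x)\<^sup>2" for x
  proof -
    have "h > 0" and hb: "h * b = 1 - e" and ha: "h * a = 1 + e"
      using assms by (simp_all add: h_def e_def field_simps)
    have "h * (b * (norm x)\<^sup>2) \<le> h * (x \<bullet> (N *v x))" "h * (x \<bullet> (N *v x)) \<le> h * (a * (norm x)\<^sup>2)"
      using lower[of x] upper[of x] \<open>h > 0\<close> by simp_all
    then have "(1 - e) * (norm x)\<^sup>2 \<le> h * (x \<bullet> (N *v x))" "h * (x \<bullet> (N *v x)) \<le> (1 + e) * (norm x)\<^sup>2"
      by (simp_all only: mult.assoc[symmetric] hb ha)
    moreover have "x \<bullet> g x = h * (x \<bullet> (N *v x)) - (norm x)\<^sup>2"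
      by (simp add: g_def inner_diff_right power2_norm_eq_inner)
    ultimately show ?thesis unfolding abs_le_iff by (simp add: algebra_simps)
  qed
  ultimately show ?thesis
    unfolding g_def h_def e_def by (rule symmetric_inner_le_of_quadratic_bound)
qed

lemma inner_matrix_vector_radial_le:
  fixes N :: "real^'n^'n"
  assumes "b * (norm z)\<^sup>2 \<le> z \<bullet> (N *v z)" and "0 \<le> c"
  shows "z \<bullet> (N *v (- (c / norm z) *\<^sub>R z)) \<le> - (b * c * norm z)"
proof (cases "z = 0")
  case False
  have "z \<bullet> (N *v (- (c / norm z) *\<^sub>R z)) = - (c / norm z) * (z \<bullet> (N *v z))"
    by (simp only: matrix_vector_mult_scaleR inner_scaleR_right)
  also have "\<dots> \<le> - (c / norm z) * (b * (norm z)\<^sup>2)"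
    using mult_left_mono[OF assms(1), of "c / norm z"] \<open>0 \<le> c\<close> by simp
  also have "\<dots> = - (b * c * norm z)"
    using False by (simp add: power2_eq_square)
  finally show ?thesis .
qed simp

lemma inner_compensated_input_nonpos:
  fixes N :: "real^'n^'n" and \<zeta> u F :: "real^'n" and a b \<kappa> f :: real
  assumes sym: "\<And>x y. x \<bullet> (N *v y) = (N *v x) \<bullet> y"
    and lower: "\<And>x. b * (norm x)\<^sup>2 \<le> x \<bullet> (N *v x)"
    and upper: "\<And>x. x \<bullet> (N *v x) \<le> a * (norm x)\<^sup>2"
    and "0 < b" and "b \<le> a" and "1 \<le> \<kappa>" and "0 \<le> f"
    and drift: "\<zeta> \<bullet> F \<le> norm \<zeta> * f"
  defines "h \<equiv> 2 / (a + b)" and "\<epsilon> \<equiv> (a - b) / (a + b)"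
  defines "u1 \<equiv> - (\<kappa> / (1 - \<epsilon>) * (\<epsilon> * norm u + f) / norm \<zeta>) *\<^sub>R \<zeta>"
  shows "\<zeta> \<bullet> (u1 + ((N ** (h *\<^sub>R mat 1) - mat 1) *v (u1 + u)) + F) \<le> 0"
proof -
  define c where "c = \<kappa> / (1 - \<epsilon>) * (\<epsilon> * norm u + f)"
  have "0 < h" and hb: "h * b = 1 - \<epsilon>" and \<epsilon>: "0 \<le> \<epsilon>" "\<epsilon> < 1"
    using \<open>0 < b\<close> \<open>b \<le> a\<close> by (auto simp: h_def \<epsilon>_def field_simps)
  then have "0 \<le> c" using \<open>1 \<le> \<kappa>\<close> \<open>0 \<le> f\<close> by (simp add: c_def)
  have "h * (\<zeta> \<bullet> (N *v u1)) \<le> - (h * b * c * norm \<zeta>)"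
    using mult_left_mono[OF inner_matrix_vector_radial_le[OF lower \<open>0 \<le> c\<close>], of h] \<open>0 < h\<close>
    by (simp add: u1_def c_def mult.assoc)
  also have "h * b * c = \<kappa> * (\<epsilon> * norm u + f)"
    using hb \<epsilon> by (simp add: c_def)
  finally have radial: "h * (\<zeta> \<bullet> (N *v u1)) \<le> - (\<kappa> * (\<epsilon> * norm u + f) * norm \<zeta>)" .
  have deviation: "\<zeta> \<bullet> (h *\<^sub>R (N *v u) - u) \<le> \<epsilon> * norm \<zeta> * norm u"
    unfolding h_def \<epsilon>_def
    by (rule inner_harmonic_scaling_sub_id_le[OF sym lower upper \<open>0 < b\<close> \<open>b \<le> a\<close>])
  have "\<zeta> \<bullet> (u1 + ((N ** (h *\<^sub>R mat 1) - mat 1) *v (u1 + u)) + F)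
      = h * (\<zeta> \<bullet> (N *v u1)) + \<zeta> \<bullet> (h *\<^sub>R (N *v u) - u) + \<zeta> \<bullet> F"
    by (simp add: matrix_vector_mult_diff_rdistrib matrix_vector_mul_assoc[symmetric]
        matrix_vector_mult_scaleR matrix_vector_right_distrib inner_add_right inner_diff_right
        algebra_simps)
  also have "\<dots> \<le> - ((\<kappa> - 1) * ((\<epsilon> * norm u + f) * norm \<zeta>))"
    using radial deviation drift by (simp add: algebra_simps)
  also have "\<dots> \<le> 0"
    using \<open>1 \<le> \<kappa>\<close> \<epsilon> \<open>0 \<le> f\<close> by simp
  finally show ?thesis .
qed

lemma norm_matrix_vector_le_spec_norm: "norm (A *v x) \<le> spec_norm A * norm x"
  unfolding spec_norm_def by (rule onorm) simp

lemma inner_neg_matrix_inv_drift_le: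
  fixes M C :: "real^'n^'n"
  assumes "0 < k" and coercive: "\<And>x. k * (norm x)\<^sup>2 \<le> x \<bullet> (M *v x)"
    and "spec_norm C \<le> kc * norm v" and "norm G \<le> kg"
  shows "z \<bullet> - (matrix_inv M *v (C *v v + G)) \<le> norm z * (inverse k * (kc * (norm v)\<^sup>2 + kg))"
proof -
  have "norm (C *v v + G) \<le> kc * (norm v)\<^sup>2 + kg"
    using norm_matrix_vector_le_spec_norm[of C v] \<open>norm G \<le> kg\<close> norm_triangle_ineq[of "C *v v" G]
      mult_right_mono[OF \<open>spec_norm C \<le> kc * norm v\<close> norm_ge_zero[of v]]
    by (simp add: power2_eq_square)
  then have "norm (matrix_inv M *v (C *v v + G)) \<le> inverse k * (kc * (norm v)\<^sup>2 + kg)"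
    using norm_matrix_inv_vector_le[OF \<open>0 < k\<close> coercive, of "C *v v + G"] \<open>0 < k\<close>
    by (smt (verit) inverse_positive_iff_positive mult_left_mono)
  then show ?thesis
    using norm_cauchy_schwarz[of z "- (matrix_inv M *v (C *v v + G))"]
    by (smt (verit) mult_left_mono norm_ge_zero norm_minus_cancel)
qed

theorem lemma6:
  fixes M C :: "real^'m^'m" and G v \<zeta> u2 :: "real^'m"
    and km kM kc kg \<kappa> :: real
  assumes sym: "transpose M = M"
    and km_pos: "0 < km" and km_le: "km \<le> kM"
    and lowM: "loewner_le (km *\<^sub>R mat 1) M"
    and uppM: "loewner_le M (kM *\<^sub>R mat 1)"
    and kc_pos: "0 < kc" and kg_pos: "0 < kg"
    and Cb: "spec_norm C \<le> kc * norm v"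
    and Gb: "norm G \<le> kg"
    and kappa: "\<kappa> \<ge> 1"
  shows
    "let Mhat = (2 / (inverse km + inverse kM)) *\<^sub>R (mat 1 :: real^'m^'m);
         \<epsilon> = (inverse km - inverse kM) / (inverse km + inverse kM);
         fv = inverse km * (kc * (norm v)\<^sup>2 + kg);
         F = - (matrix_inv M *v (C *v v + G));
         u1 = (if \<zeta> \<noteq> 0
               then - ((\<kappa> / (1 - \<epsilon>)) * (\<epsilon> * norm u2 + fv) / norm \<zeta>) *\<^sub>R \<zeta>
               else 0);
         Z = u1 + ((matrix_inv M ** Mhat - mat 1) *v (u1 + u2)) + F
     in \<zeta> \<bullet> Z \<le> 0"
proof -
  have lower: "\<And>x. km * (norm x)\<^sup>2 \<le> x \<bullet> (M *v x)"
    using lowM by (simp add: scaled_identity_loewner_le_iff)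
  have upper: "\<And>x. x \<bullet> (M *v x) \<le> kM * (norm x)\<^sup>2"
    using uppM by (simp add: loewner_le_scaled_identity_iff)
  have "0 < inverse kM" "inverse kM \<le> inverse km"
    using km_pos km_le by (auto simp: le_imp_inverse_le)
  moreover have "0 \<le> inverse km * (kc * (norm v)\<^sup>2 + kg)"
    using km_pos kc_pos kg_pos by simp
  ultimately show ?thesis
    using inner_compensated_input_nonpos[where \<zeta> = \<zeta> and u = u2, OF
        symmetric_matrix_inv_inner[OF sym invertible_of_coercive[OF km_pos lower]]
        matrix_inv_quadratic_lower[OF sym km_pos km_le lower upper]
        matrix_inv_quadratic_upper[OF km_pos lower] _ _ kappa _
        inner_neg_matrix_inv_drift_le[OF km_pos lower Cb Gb]]
    by (simp add: Let_def)
qed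

end
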